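(* Let $\mathfrak{H}=\mathfrak{h}_0\otimes\Gamma(\mathfrak{K}\otimes L^2[0,\infty))$ and, for $t\ge0$, let $\mathfrak{A}_{t]}$ be the von Neumann algebra of bounded operators acting trivially on the future factor $\Gamma(\mathfrak{K}\otimes L^2(t,\infty))$. Let $Z$ be an adapted, self-commuting quantum stochastic process on the Fock space, and let $\mathfrak{Z}_{t]}=\mathrm{vN}\{Z(s):0\le s\le t\}$. Let $U^{[Z]}$ be an adapted unitary process (a controlled quantum flow, i.e. the solution of a Hudson–Parthasarathy QSDE whose $SLH$-coefficients are adapted processes with values in $\mathfrak{Z}_{t]}'$ at each time $t$), and set $Y(t)=U^{[Z]}(t)^\ast Z(t)U^{[Z]}(t)$ and $\mathfrak{Y}_{t]}=U^{[Z]}(t)^\ast\,\mathfrak{Z}_{t]}\,U^{[Z]}(t)$. Let $F$ be an adapted process causally controlled by $Z$, i.e. $F(t)\in\mathfrak{Z}_{t]}'$ for each $t$. Then the process $\tilde F$ defined by $\tilde F(t)=U^{[Z]}(t)^\ast F(t)\,U^{[Z]}(t)$ is an adapted process causally controlled by $Y$, i.e. $\tilde F(t)\in\mathfrak{Y}_{t]}'$ for each $t$.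
   Context: For a von Neumann subalgebra $\mathfrak{B}$ of the algebra $\mathfrak{A}$ of bounded operators on $\mathfrak{H}$, the commutant is $\mathfrak{B}'=\{A\in\mathfrak{A}:[A,B]=0\ \forall B\in\mathfrak{B}\}$; $\mathrm{vN}\{\cdots\}$ denotes the von Neumann algebra generated by the given observables. A process $F$ is adapted if $F(t)\in\mathfrak{A}_{t]}$ for each $t$. A process is said to be causally controlled by a commutative process $Z$ if its value at each time $t$ lies in $\mathfrak{Z}_{t]}'$. *)

theory Defs
  imports Complex_Main
begin

text \<open>The carrier type 'a plays the role of the algebra of all bounded operators
on the Hilbert space H.\<close>

definition star_ring :: "('a::ring_1 \<Rightarrow> 'a) \<Rightarrow> bool" where
  "star_ring adj \<longleftrightarrow>
     (\<forall>x y. adj (x + y) = adj x + adj y) \<and>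
     (\<forall>x y. adj (x * y) = adj y * adj x) \<and>
     (\<forall>x. adj (adj x) = x) \<and> adj 1 = 1"

definition commutant :: "'a::ring_1 set \<Rightarrow> 'a set" where
  "commutant S = {A. \<forall>B\<in>S. A * B = B * A}"

text \<open>Von Neumann algebra generated by a set S (bicommutant theorem):
the double commutant of S together with the adjoints of its elements.\<close>
definition vN :: "('a::ring_1 \<Rightarrow> 'a) \<Rightarrow> 'a set \<Rightarrow> 'a set" where
  "vN adj S = commutant (commutant (S \<union> adj ` S))"

definition vN_subalgebra :: "('a::ring_1 \<Rightarrow> 'a) \<Rightarrow> 'a set \<Rightarrow> bool" where
  "vN_subalgebra adj B \<longleftrightarrow> adj ` B \<subseteq> B \<and> commutant (commutant B) = B"

definition unitary :: "('a::ring_1 \<Rightarrow> 'a) \<Rightarrow> 'a \<Rightarrow> bool" where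
  "unitary adj U \<longleftrightarrow> adj U * U = 1 \<and> U * adj U = 1"

text \<open>Filtration A t = algebra of operators acting trivially on the future
Fock factor; a process is adapted if X t \<in> A t for all t \<ge> 0.\<close>
definition adapted :: "(real \<Rightarrow> 'a set) \<Rightarrow> (real \<Rightarrow> 'a) \<Rightarrow> bool" where
  "adapted A X \<longleftrightarrow> (\<forall>t\<ge>0. X t \<in> A t)"

definition gen_alg :: "('a::ring_1 \<Rightarrow> 'a) \<Rightarrow> (real \<Rightarrow> 'a) \<Rightarrow> real \<Rightarrow> 'a set" where
  "gen_alg adj Z t = vN adj {Z s | s. 0 \<le> s \<and> s \<le> t}"

end

theory Submission
  imports Defs
begin

text \<open>The statement is purely algebraic. Conjugation by U(t) maps an operator commuting
with F(t) to one commuting with the conjugate of F(t), since only U(t) U(t)* = 1 is needed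
to cancel the inner factors; and U(t)* F(t) U(t) stays in the von Neumann algebra A(t)
because a double commutant is closed under products.\<close>

lemma commutant_mult_closed:
  assumes "a \<in> commutant S" and "b \<in> commutant S"
  shows "a * b \<in> commutant S"
  using assms unfolding commutant_def by (simp add: mult.assoc) (metis mult.assoc)

lemma vN_subalgebra_conj_closed:
  assumes "vN_subalgebra adj B" and "U \<in> B" and "X \<in> B"
  shows "adj U * X * U \<in> B"
proof -
  have closed: "adj ` B \<subseteq> B" and bicomm: "commutant (commutant B) = B"
    using assms(1) unfolding vN_subalgebra_def by auto
  have "adj U \<in> commutant (commutant B)"
    using closed assms(2) bicomm by blast
  with assms(2,3) bicomm have "adj U * X * U \<in> commutant (commutant B)"
    by (metis commutant_mult_closed)
  with bicomm show ?thesis by simp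
qed

lemma conj_mem_commutant_conj_image:
  assumes inv: "U * V = 1" and F: "F \<in> commutant S"
  shows "V * F * U \<in> commutant ((\<lambda>X. V * X * U) ` S)"
  unfolding commutant_def
proof (intro CollectI ballI)
  fix B assume "B \<in> (\<lambda>X. V * X * U) ` S"
  then obtain X where X: "X \<in> S" and B: "B = V * X * U" by blast
  have FX: "F * X = X * F" using F X unfolding commutant_def by blast
  have "V * F * U * B = V * (F * (U * V) * X) * U"
    by (simp add: B mult.assoc)
  also have "\<dots> = V * (X * (U * V) * F) * U"
    by (simp add: inv FX)
  also have "\<dots> = B * (V * F * U)"
    by (simp add: B mult.assoc)
  finally show "V * F * U * B = B * (V * F * U)" .
qed

theorem mainTheorem2:
  fixes adj :: "'a::ring_1 \<Rightarrow> 'a"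
    and A :: "real \<Rightarrow> 'a set"
    and Z U F :: "real \<Rightarrow> 'a"
  assumes star: "star_ring adj"
    and filt_vN: "\<And>t. 0 \<le> t \<Longrightarrow> vN_subalgebra adj (A t)"
    and filt_mono: "\<And>s t. 0 \<le> s \<Longrightarrow> s \<le> t \<Longrightarrow> A s \<subseteq> A t"
    and Z_adapted: "adapted A Z"
    and Z_comm: "\<And>s t. 0 \<le> s \<Longrightarrow> 0 \<le> t \<Longrightarrow> Z s * Z t = Z t * Z s"
    and U_adapted: "adapted A U"
    and U_unitary: "\<And>t. 0 \<le> t \<Longrightarrow> unitary adj (U t)"
    and F_adapted: "adapted A F"
    and F_controlled: "\<And>t. 0 \<le> t \<Longrightarrow> F t \<in> commutant (gen_alg adj Z t)"
  shows "adapted A (\<lambda>t. adj (U t) * F t * U t) \<and>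
         (\<forall>t\<ge>0. adj (U t) * F t * U t \<in>
                  commutant ((\<lambda>X. adj (U t) * X * U t) ` gen_alg adj Z t))"
proof (intro conjI allI impI)
  show "adapted A (\<lambda>t. adj (U t) * F t * U t)"
    using filt_vN U_adapted F_adapted
    unfolding adapted_def by (simp add: vN_subalgebra_conj_closed)
next
  fix t :: real assume "0 \<le> t"
  then have "U t * adj (U t) = 1"
    using U_unitary unfolding unitary_def by blast
  with F_controlled[OF \<open>0 \<le> t\<close>]
  show "adj (U t) * F t * U t \<in> commutant ((\<lambda>X. adj (U t) * X * U t) ` gen_alg adj Z t)"
    by (rule conj_mem_commutant_conj_image[rotated])
qed

end
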